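(* We have \[ H(n, k) = \sum_{v = 0}^{s - t - 1} H_p(d_0, \ldots, d_{t + v + 1})\cdot p^{v - ks + U_p(k)} + O\big(p^{s - t - ks + U_p(k)}\big) . \]
   Context: For integers $n \geq k \geq 1$, $H(n,k) := \sum_{1 \leq i_1 < \cdots < i_k \leq n} \frac{1}{i_1 \cdots i_k}$. Fix a prime $p$. For digits $a_0,\ldots,a_v \in \{0,\ldots,p-1\}$ with $a_0 \neq 0$, write $\langle a_0, \ldots, a_v \rangle_p := \sum_{i=0}^v a_i p^{v-i}$ (base $p$ representation). Let $k = \langle e_0, \ldots, e_t \rangle_p + 1 \geq 2$ and $n = \langle d_0, \ldots, d_s \rangle_p$ with $s \geq t+1$ and $d_i = e_i$ for $i = 0,\ldots,t$. For $a_0,\ldots,a_v \in \{0,\ldots,p-1\}$ put $B_p(a_0,\ldots,a_v) := \langle a_0,\ldots,a_v\rangle_p - \langle a_0,\ldots,a_{v-1}\rangle_p$ (with $\langle a_0,\ldots,a_{v-1}\rangle_p = 0$ if $v=0$), and $\mathcal{B}_p(a_0,\ldots,a_v) := \{c_p(i) : i = 1,\ldots,B_p(a_0,\ldots,a_v)\}$, where $c_p(1) < c_p(2) < \cdots$ is the sequence of all positive integers not divisible by $p$. For $v \geq 0$ let $\mathcal{A}_p(n,v) := \{m \in \{1,\ldots,n\} : \nu_p(m) = s - v\}$. Let $\mathcal{C}_p(n,k) := \bigcup_{v=0}^t \mathcal{A}_p(n,v)$ and $\Pi_p(k) := \prod_{j \in \mathcal{C}_p(n,k)} \frac{1}{j/p^{\nu_p(j)}}$,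 i.e. the product of the reciprocals of the $p$-free parts $j/p^{\nu_p(j)}$ of the elements $j \in \mathcal{C}_p(n,k)$ (this depends only on $p$ and $k$). Put $U_p(k) := \sum_{v=0}^t B_p(e_0,\ldots,e_v)\, v + t + 1$. For $a_0,\ldots,a_{t+v+1} \in \{0,\ldots,p-1\}$ with $v \geq 0$ and $a_i = e_i$ for $i=0,\ldots,t$, set \[ H_p^\prime(a_0,\ldots,a_{t+v}) := \sum_{\substack{0 \leq v_1,\ldots,v_k \leq t+v \\ v_1+\cdots+v_k = U_p(k)+v}} \; \sum_{\substack{j_1/p^{v_1} < \cdots < j_k/p^{v_k} \\ j_1 \in \mathcal{B}_p(a_0,\ldots,a_{v_1}),\ldots, j_k \in \mathcal{B}_p(a_0,\ldots,a_{v_k})}} \frac{1}{j_1\cdots j_k} \] and \[ H_p(a_0,\ldots,a_{t+v+1}) := H_p^\prime(a_0,\ldots,a_{t+v}) + \Pi_p(k) \sum_{j \in \mathcal{B}_p(a_0,\ldots,a_{t+v+1})} \frac{1}{j}. \] $O(p^v)$ denotes a rational number with $p$-adic valuation at least $v$. *)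

theory Defs
  imports Complex_Main "HOL-Library.Infinite_Set" "HOL-Library.FuncSet"
    "HOL-Computational_Algebra.Primes"
begin

text \<open>Harmonic-type sum H(n,k): sum over k-element subsets of {1..n} (i.e. over i_1 < ... < i_k).\<close>
definition Hnk :: "nat \<Rightarrow> nat \<Rightarrow> rat" where
  "Hnk n k = (\<Sum>S\<in>{S. S \<subseteq> {1..n} \<and> card S = k}. 1 / (\<Prod>i\<in>S. of_nat i))"

text \<open>Base-p value of digits a_0,...,a_v (a_0 most significant).\<close>
definition numval :: "nat \<Rightarrow> (nat \<Rightarrow> nat) \<Rightarrow> nat \<Rightarrow> nat" where
  "numval p a v = (\<Sum>i=0..v. a i * p ^ (v - i))"

definition Bp :: "nat \<Rightarrow> (nat \<Rightarrow> nat) \<Rightarrow> nat \<Rightarrow> nat" where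
  "Bp p a v = numval p a v - (if v = 0 then 0 else numval p a (v - 1))"

text \<open>c_p(i), i \<ge> 1: the i-th positive integer not divisible by p.\<close>
definition cp :: "nat \<Rightarrow> nat \<Rightarrow> nat" where
  "cp p i = enumerate {m. 0 < m \<and> \<not> p dvd m} (i - 1)"

definition Bset :: "nat \<Rightarrow> (nat \<Rightarrow> nat) \<Rightarrow> nat \<Rightarrow> nat set" where
  "Bset p a v = {cp p i | i. 1 \<le> i \<and> i \<le> Bp p a v}"

text \<open>A_p(n,v) and C_p(n,k) (s is the index of the last digit of n, t that of k-1).\<close>
definition Ap :: "nat \<Rightarrow> nat \<Rightarrow> nat \<Rightarrow> nat \<Rightarrow> nat set" where
  "Ap p n s v = {m \<in> {1..n}. multiplicity p m = s - v}"

definition Cp :: "nat \<Rightarrow> nat \<Rightarrow> nat \<Rightarrow> nat \<Rightarrow> nat set" where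
  "Cp p n s t = (\<Union>v\<in>{0..t}. Ap p n s v)"

definition Pip :: "nat \<Rightarrow> nat \<Rightarrow> nat \<Rightarrow> nat \<Rightarrow> rat" where
  "Pip p n s t = (\<Prod>j\<in>Cp p n s t. 1 / of_nat (j div p ^ multiplicity p j))"

text \<open>U_p(k), with e the digits e_0..e_t of k-1.\<close>
definition Up :: "nat \<Rightarrow> nat \<Rightarrow> (nat \<Rightarrow> nat) \<Rightarrow> nat" where
  "Up p t e = (\<Sum>v=0..t. Bp p e v * v) + t + 1"

definition Hprime :: "nat \<Rightarrow> nat \<Rightarrow> nat \<Rightarrow> (nat \<Rightarrow> nat) \<Rightarrow> (nat \<Rightarrow> nat) \<Rightarrow> nat \<Rightarrow> rat" where
  "Hprime p k t e a v =
    (\<Sum>vs\<in>{vs \<in> {1..k} \<rightarrow>\<^sub>E {0..t+v}. (\<Sum>i\<in>{1..k}. vs i) = Up p t e + v}.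
       \<Sum>js\<in>{js \<in> (\<Pi>\<^sub>E i\<in>{1..k}. Bset p a (vs i)).
               \<forall>i\<in>{1..<k}. (of_nat (js i) / of_nat p ^ vs i :: rat)
                              < of_nat (js (i+1)) / of_nat p ^ vs (i+1)}.
         1 / (\<Prod>i\<in>{1..k}. of_nat (js i)))"

definition Hp :: "nat \<Rightarrow> nat \<Rightarrow> nat \<Rightarrow> nat \<Rightarrow> nat \<Rightarrow> (nat \<Rightarrow> nat) \<Rightarrow> (nat \<Rightarrow> nat) \<Rightarrow> nat \<Rightarrow> rat" where
  "Hp p n s t k e a v = Hprime p k t e a v
     + Pip p n s t * (\<Sum>j\<in>Bset p a (t+v+1). 1 / of_nat j)"

text \<open>q = O(p^e): q has p-adic valuation at least e (q = 0 allowed).\<close>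
definition padic_ge :: "nat \<Rightarrow> rat \<Rightarrow> int \<Rightarrow> bool" where
  "padic_ge p q e \<longleftrightarrow> (\<exists>a b :: int. b \<noteq> 0 \<and> \<not> int p dvd b \<and>
      q = of_int a / of_int b * of_nat p powi e)"

end

theory Submission
  imports Defs
begin

text \<open>Write each \<open>m \<le> n\<close> as \<open>m = p^\<nu> m'\<close> with \<open>p \<nmid> m'\<close> and call \<open>s - \<nu>\<close> the level of \<open>m\<close>;
  since \<open>n < p^(s+1)\<close> it lies in \<open>0..s\<close>. Then \<open>1/(m_1\<cdots>m_k) = p^(L - ks) / (m_1'\<cdots>m_k')\<close>, where \<open>L\<close> is
  the total level of the subset, so a \<open>k\<close>-subset of \<open>{1..n}\<close> contributes to \<open>H(n,k)\<close> at \<open>p\<close>-adic order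
  \<open>L - ks\<close>. The elements of level at most \<open>t\<close> are the multiples of \<open>p^(s-t)\<close> up to \<open>n\<close>: there are
  exactly \<open>k - 1\<close> of them, of total level \<open>U_p(k) - t - 1\<close>. An exchange argument shows that every
  \<open>k\<close>-subset has total level at least \<open>U_p(k)\<close>, and that a subset of total level \<open>U_p(k) + v\<close> with
  \<open>v < s - t\<close> either has all its levels at most \<open>t + v\<close> (these subsets are the terms of \<open>H'_p\<close>, listed
  in increasing order) or consists of the \<open>k - 1\<close> elements of low level together with one element of
  level \<open>t + v + 1\<close> (these give the second summand of \<open>H_p\<close>). All remaining subsets have total
  level at least \<open>U_p(k) + s - t\<close>.\<close>

section \<open>Base-\<open>p\<close> digits and integers prime to \<open>p\<close>\<close>

lemma numval_0 [simp]: "numval p a 0 = a 0"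
  unfolding numval_def by simp

lemma numval_Suc: "numval p a (Suc v) = numval p a v * p + a (Suc v)"
proof -
  have "numval p a (Suc v) = (\<Sum>i=0..v. a i * p ^ (Suc v - i)) + a (Suc v)"
    unfolding numval_def by simp
  also have "(\<Sum>i=0..v. a i * p ^ (Suc v - i)) = (\<Sum>i=0..v. a i * p ^ (v - i)) * p"
    unfolding sum_distrib_right by (intro sum.cong) (auto simp: Suc_diff_le)
  finally show ?thesis unfolding numval_def .
qed

lemma numval_cong: "(\<And>i. i \<le> v \<Longrightarrow> a i = b i) \<Longrightarrow> numval p a v = numval p b v"
  unfolding numval_def by (intro sum.cong) auto

lemma Bp_cong: "(\<And>i. i \<le> v \<Longrightarrow> a i = b i) \<Longrightarrow> Bp p a v = Bp p b v"
  unfolding Bp_def using numval_cong[of v a b p] numval_cong[of "v - 1" a b p] by simp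

lemma numval_less_power:
  assumes "\<And>i. i \<le> v \<Longrightarrow> a i < p"
  shows "numval p a v < p ^ Suc v"
  using assms
proof (induction v)
  case 0
  then show ?case by simp
next
  case (Suc v)
  then have "numval p a v < p ^ Suc v" "a (Suc v) < p" by auto
  then have "numval p a v * p + a (Suc v) < (numval p a v + 1) * p" by simp
  also have "\<dots> \<le> p ^ Suc v * p"
    using \<open>numval p a v < p ^ Suc v\<close> by (intro mult_right_mono) auto
  finally show ?case by (simp add: numval_Suc mult.commute)
qed

lemma numval_div_power:
  assumes "\<And>i. i \<le> v \<Longrightarrow> a i < p" and "w \<le> v"
  shows "numval p a v div p ^ (v - w) = numval p a w"
  using assms
proof (induction v)
  case 0
  then show ?case by simp
next
  case (Suc v)
  show ?case
  proof (cases "w = Suc v")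
    case False
    then have "w \<le> v" using Suc.prems by simp
    have "numval p a (Suc v) div p ^ (Suc v - w) = numval p a (Suc v) div p div p ^ (v - w)"
      using \<open>w \<le> v\<close> by (simp add: Suc_diff_le div_mult2_eq)
    also have "numval p a (Suc v) div p = numval p a v"
      using Suc.prems(1)[of "Suc v"] by (simp add: numval_Suc)
    finally show ?thesis using Suc \<open>w \<le> v\<close> by simp
  qed simp
qed

lemma card_multiples_atLeastAtMost:
  assumes "0 < q"
  shows "card {x \<in> {1..N}. q dvd x} = N div (q::nat)"
proof -
  have "{x \<in> {1..N}. q dvd x} = (*) q ` {1..N div q}"
    using assms by (auto simp: less_eq_div_iff_mult_less_eq mult.commute elim!: dvdE intro!: image_eqI)
  moreover have "inj_on ((*) q) {1..N div q}"
    using assms by (auto simp: inj_on_def)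
  ultimately show ?thesis by (simp add: card_image)
qed

lemma card_nonmultiples_atMost:
  assumes "0 < q"
  shows "card {x. 0 < x \<and> \<not> q dvd x \<and> x \<le> N} = N - N div (q::nat)"
proof -
  have "{x. 0 < x \<and> \<not> q dvd x \<and> x \<le> N} = {1..N} - {x \<in> {1..N}. q dvd x}"
    by auto
  also have "card \<dots> = card {1..N} - card {x \<in> {1..N}. q dvd x}"
    by (rule card_Diff_subset) auto
  finally show ?thesis using card_multiples_atLeastAtMost[OF assms] by simp
qed

lemma enumerate_image_lessThan_card:
  fixes X :: "nat set"
  assumes "infinite X"
  shows "enumerate X ` {..<card {x \<in> X. x \<le> N}} = {x \<in> X. x \<le> N}"
proof -
  define I where "I = {i. enumerate X i \<le> N}"
  have inj: "inj (enumerate X)"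
    using strict_mono_enumerate[OF assms] strict_mono_imp_inj_on by blast
  have image_I: "enumerate X ` I = {x \<in> X. x \<le> N}"
    using enumerate_in_set[OF assms] enumerate_Ex[OF assms] unfolding I_def by blast
  have "finite I"
    unfolding I_def using finite_vimageI[OF finite_atMost inj] by (simp add: vimage_def)
  have "I = {..<card I}"
  proof (rule card_subset_eq)
    show "I \<subseteq> {..<card I}"
    proof
      fix i assume "i \<in> I"
      then have "{..i} \<subseteq> I"
        using assms unfolding I_def by (auto intro: order_trans[rotated])
      then have "card {..i} \<le> card I" using \<open>finite I\<close> by (rule card_mono[rotated])
      then show "i \<in> {..<card I}" by simp
    qed
  qed simp_all
  moreover have "card I = card {x \<in> X. x \<le> N}"
    using card_image[OF inj_on_subset[OF inj subset_UNIV]] image_I by metis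
  ultimately show ?thesis using image_I by simp
qed

section \<open>Strictly increasing enumerations\<close>

lemma strict_mono_on_atLeastAtMostI:
  fixes f :: "nat \<Rightarrow> 'a::linorder"
  assumes "\<And>i. i \<in> {1..<k} \<Longrightarrow> f i < f (i + 1)"
  shows "strict_mono_on {1..k} f"
proof (rule strict_mono_onI)
  fix i j :: nat
  assume "i \<in> {1..k}" "j \<in> {1..k}" "i < j"
  then have "Suc i \<le> j" "j \<le> k" "1 \<le> i" by auto
  then show "f i < f j"
  proof (induction j rule: dec_induct)
    case base
    then show ?case using assms by simp
  next
    case (step m)
    then show ?case using assms[of m] by (auto intro: less_trans)
  qed
qed

lemma strict_mono_on_atLeastAtMost_unique:
  fixes f g :: "nat \<Rightarrow> 'a::linorder"
  assumes "strict_mono_on {1..k} f" "strict_mono_on {1..k} g"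
    and "f ` {1..k} = g ` {1..k}" and "i \<in> {1..k}"
  shows "f i = g i"
proof -
  have sorted: "sorted_wrt (<) (map h [1..<Suc k])" if "strict_mono_on {1..k} h" for h :: "nat \<Rightarrow> 'a"
    unfolding sorted_wrt_iff_nth_less using that by (auto simp del: upt_Suc intro: strict_mono_onD)
  have "map f [1..<Suc k] = map g [1..<Suc k]"
    using assms(3) by (intro strict_sorted_equal sorted assms(1,2))
      (simp del: upt_Suc add: atLeastLessThanSuc_atLeastAtMost)
  then show ?thesis
    using assms(4) by (metis atLeastAtMost_iff atLeastLessThan_iff less_Suc_eq_le map_eq_conv set_upt)
qed

lemma finite_ex_strict_mono_on_atLeastAtMost:
  fixes S :: "'a::wellorder set"
  assumes "finite S"
  obtains f where "strict_mono_on {1..card S} f" "f ` {1..card S} = S"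
proof -
  obtain h where h: "bij_betw h {..<card S} S" "strict_mono_on {..<card S} h"
    using ex_bij_betw_strict_mono_card[OF assms] by blast
  have shift: "(\<lambda>i. i - 1) ` {1..card S} = {..<card S}"
    by (auto simp: image_iff intro!: bexI[of _ "Suc _"])
  show ?thesis
  proof
    show "strict_mono_on {1..card S} (\<lambda>i. h (i - 1))"
      by (rule strict_mono_onI, rule strict_mono_onD[OF h(2)]) auto
    show "(\<lambda>i. h (i - 1)) ` {1..card S} = S"
      using h(1) shift by (metis bij_betw_def image_image)
  qed
qed

lemma divide_power_less_iff:
  assumes "0 < p" "a \<le> s" "b \<le> s"
  shows "(of_nat x / of_nat p ^ a :: rat) < of_nat y / of_nat p ^ b
           \<longleftrightarrow> p ^ (s - a) * x < p ^ (s - b) * y"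
proof -
  have scale: "(of_nat z / of_nat p ^ c :: rat) = of_nat (p ^ (s - c) * z) / of_nat p ^ s"
    if "c \<le> s" for z c
  proof -
    have "(of_nat p :: rat) ^ s = of_nat p ^ c * of_nat p ^ (s - c)"
      using that by (simp flip: power_add)
    then show ?thesis using assms(1) by (simp add: field_simps)
  qed
  show ?thesis
    unfolding scale[OF assms(2)] scale[OF assms(3)] using assms(1)
    by (simp add: divide_less_cancel del: of_nat_mult of_nat_power)
qed

section \<open>\<open>p\<close>-adic orders\<close>

lemma padic_ge_0: "prime p \<Longrightarrow> padic_ge p 0 e"
  unfolding padic_ge_def by (rule exI[of _ 0], rule exI[of _ 1]) (auto simp: prime_gt_1_nat)

lemma padic_ge_add:
  assumes "prime p" "padic_ge p x e" "padic_ge p y e"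
  shows "padic_ge p (x + y) e"
proof -
  obtain a b where ab: "b \<noteq> 0" "\<not> int p dvd b" "x = of_int a / of_int b * of_nat p powi e"
    using assms(2) unfolding padic_ge_def by blast
  obtain a' b' where ab': "b' \<noteq> 0" "\<not> int p dvd b'" "y = of_int a' / of_int b' * of_nat p powi e"
    using assms(3) unfolding padic_ge_def by blast
  have "\<not> int p dvd b * b'"
    using ab(2) ab'(2) assms(1) by (simp add: prime_dvd_mult_iff)
  moreover have "x + y = of_int (a * b' + a' * b) / of_int (b * b') * of_nat p powi e"
    using ab ab' by (simp add: field_simps)
  ultimately show ?thesis
    unfolding padic_ge_def using ab(1) ab'(1) by (metis mult_eq_0_iff)
qed

lemma padic_ge_sum:
  assumes "prime p" "finite A" "\<And>a. a \<in> A \<Longrightarrow> padic_ge p (f a) e"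
  shows "padic_ge p (sum f A) e"
  using assms(2,3)
  by (induction A rule: finite_induct) (simp_all add: padic_ge_0 padic_ge_add assms(1))

lemma padic_ge_divide_power:
  assumes "prime p" "b \<noteq> 0" "\<not> int p dvd b" "u \<le> w"
  shows "padic_ge p (1 / of_int b * of_nat p ^ w / of_nat p ^ m) (int u - int m)"
proof -
  have "(of_nat p :: rat) \<noteq> 0" using assms(1) by (simp add: prime_gt_0_nat)
  then have "1 / of_int b * of_nat p ^ w / of_nat p ^ m
      = of_int (int p ^ (w - u)) / of_int b * (of_nat p :: rat) powi (int u - int m)"
    using assms(4) by (simp add: power_int_diff flip: power_add)
  then show ?thesis unfolding padic_ge_def using assms(2,3) by blast
qed

section \<open>Levels\<close>

locale base_p_digits =
  fixes p n s t k :: nat and d e :: "nat \<Rightarrow> nat"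
  assumes prime: "prime p"
    and digits_less: "\<And>i. i \<le> s \<Longrightarrow> d i < p"
    and n_eq: "n = numval p d s"
    and t_less: "t < s"
    and common_prefix: "\<And>i. i \<le> t \<Longrightarrow> d i = e i"
    and k_eq: "k = numval p d t + 1"
begin

abbreviation U :: nat where "U \<equiv> Up p t e"

text \<open>With \<open>level m = s - \<nu>_p(m)\<close>, \<open>level_set w\<close> is the paper's \<open>A_p(n,w)\<close>, \<open>low\<close> is \<open>C_p(n,k)\<close> and
  \<open>pfree\<close> is the \<open>p\<close>-free part.\<close>

definition level :: "nat \<Rightarrow> nat" where "level m = s - multiplicity p m"
definition pfree :: "nat \<Rightarrow> nat" where "pfree m = m div p ^ multiplicity p m"
definition total_level :: "nat set \<Rightarrow> nat" where "total_level S = (\<Sum>m\<in>S. level m)"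
definition level_set :: "nat \<Rightarrow> nat set" where "level_set w = {m \<in> {1..n}. level m = w}"
definition pfree_upto :: "nat \<Rightarrow> nat set"
  where "pfree_upto w = {j. 0 < j \<and> \<not> p dvd j \<and> j \<le> numval p d w}"
definition low :: "nat set" where "low = {m \<in> {1..n}. level m \<le> t}"
definition k_subsets :: "nat set set" where "k_subsets = {S. S \<subseteq> {1..n} \<and> card S = k}"
definition recip_prod :: "nat set \<Rightarrow> rat" where "recip_prod S = 1 / (\<Prod>i\<in>S. of_nat i)"

lemma p_pos: "0 < p"
  using prime by (simp add: prime_gt_0_nat)

lemma multiplicity_le_s:
  assumes "m \<in> {1..n}"
  shows "multiplicity p m \<le> s"
proof -
  have "p ^ multiplicity p m \<le> m"
    using assms by (intro dvd_imp_le multiplicity_dvd) auto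
  also have "m < p ^ Suc s"
    using assms numval_less_power[of s d p] digits_less n_eq by simp
  finally have "multiplicity p m < Suc s"
    by (rule power_less_imp_less_exp[OF prime_gt_1_nat[OF prime]])
  then show ?thesis by simp
qed

lemma pfree_decomp: "m = p ^ multiplicity p m * pfree m"
  unfolding pfree_def using multiplicity_dvd[of p m] by simp

lemma pfree_not_dvd: "0 < m \<Longrightarrow> \<not> p dvd pfree m"
  unfolding pfree_def by (rule multiplicity_decompose) (use prime in auto)

lemma pfree_pos: "0 < m \<Longrightarrow> 0 < pfree m"
  using pfree_decomp[of m] by (metis gr0I mult_0_right)

lemma multiplicity_power_mult: "\<not> p dvd j \<Longrightarrow> multiplicity p (p ^ r * j) = r"
  by (rule multiplicity_decomposeI[OF refl]) (use p_pos in simp_all)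

lemma pfree_power_mult: "\<not> p dvd j \<Longrightarrow> pfree (p ^ r * j) = j"
  unfolding pfree_def multiplicity_power_mult using p_pos by simp

lemma n_div_power: "w \<le> s \<Longrightarrow> n div p ^ (s - w) = numval p d w"
  using numval_div_power[of s d p w] digits_less n_eq by simp

lemma card_pfree_upto:
  assumes "w \<le> s"
  shows "card (pfree_upto w) = Bp p d w"
proof -
  have "card (pfree_upto w) = numval p d w - numval p d w div p"
    unfolding pfree_upto_def using card_nonmultiples_atMost[OF p_pos] by simp
  moreover have "numval p d w div p = (if w = 0 then 0 else numval p d (w - 1))"
  proof (cases w)
    case (Suc w')
    then show ?thesis
      using numval_div_power[of w d p w'] digits_less assms by simp
  qed (use digits_less in simp)
  ultimately show ?thesis unfolding Bp_def by simp
qed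

lemma infinite_nonmultiples: "infinite {m. 0 < m \<and> \<not> p dvd m}"
  unfolding infinite_nat_iff_unbounded_le
proof
  fix m
  have "\<not> p dvd m * p + 1"
    using prime_gt_1_nat[OF prime] dvd_add_right_iff[of p "m * p" 1] by auto
  then show "\<exists>x\<ge>m. x \<in> {m. 0 < m \<and> \<not> p dvd m}"
    using p_pos by (intro exI[of _ "m * p + 1"]) (auto intro!: le_SucI)
qed

lemma Bset_eq_pfree_upto:
  assumes "w \<le> s"
  shows "Bset p d w = pfree_upto w"
proof -
  define X where "X = {m. 0 < m \<and> \<not> p dvd m}"
  have pfree_upto_eq: "pfree_upto w = {x \<in> X. x \<le> numval p d w}"
    unfolding X_def pfree_upto_def by auto
  have "Bset p d w = enumerate X ` {..<Bp p d w}"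
    unfolding Bset_def cp_def X_def[symmetric]
    by (auto simp: image_iff intro!: exI[of _ "Suc _"] bexI[of _ "_ - 1"])
  also have "\<dots> = pfree_upto w"
    using enumerate_image_lessThan_card[of X "numval p d w"] infinite_nonmultiples
    unfolding X_def[symmetric] card_pfree_upto[OF assms, symmetric] pfree_upto_eq by simp
  finally show ?thesis .
qed

lemma level_set_eq_image:
  assumes "w \<le> s"
  shows "level_set w = (\<lambda>j. p ^ (s - w) * j) ` pfree_upto w"
proof (intro equalityI subsetI)
  fix m assume m: "m \<in> level_set w"
  then have "m \<in> {1..n}" "level m = w" unfolding level_set_def by auto
  then have "multiplicity p m = s - w"
    using multiplicity_le_s unfolding level_def by force
  then have m_eq: "m = p ^ (s - w) * pfree m"
    using pfree_decomp[of m] by simp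
  then have "pfree m \<le> n div p ^ (s - w)"
    using \<open>m \<in> {1..n}\<close> p_pos by (simp add: less_eq_div_iff_mult_less_eq mult.commute)
  then have "pfree m \<in> pfree_upto w"
    unfolding pfree_upto_def using n_div_power[OF assms] pfree_not_dvd pfree_pos \<open>m \<in> {1..n}\<close>
    by auto
  then show "m \<in> (\<lambda>j. p ^ (s - w) * j) ` pfree_upto w" using m_eq by blast
next
  fix m assume "m \<in> (\<lambda>j. p ^ (s - w) * j) ` pfree_upto w"
  then obtain j where j: "j \<in> pfree_upto w" "m = p ^ (s - w) * j" by blast
  then have "0 < j" "\<not> p dvd j" "j \<le> n div p ^ (s - w)"
    unfolding pfree_upto_def using n_div_power[OF assms] by auto
  moreover have "level m = w"
    unfolding level_def j(2) multiplicity_power_mult[OF \<open>\<not> p dvd j\<close>] using assms by simp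
  ultimately show "m \<in> level_set w"
    unfolding level_set_def j(2) using p_pos by (auto simp: less_eq_div_iff_mult_less_eq mult.commute)
qed

lemma level_pfree_decomp:
  assumes "m \<in> {1..n}"
  shows "m = p ^ (s - level m) * pfree m" "pfree m \<in> pfree_upto (level m)"
proof -
  have "m \<in> level_set (level m)" using assms unfolding level_set_def by simp
  then obtain j where j: "j \<in> pfree_upto (level m)" "m = p ^ (s - level m) * j"
    using level_set_eq_image[of "level m"] unfolding level_def by auto
  have "pfree m = pfree (p ^ (s - level m) * j)"
    using j(2) by (rule arg_cong)
  also have "\<dots> = j"
    using j(1) pfree_power_mult unfolding pfree_upto_def by simp
  finally show "m = p ^ (s - level m) * pfree m" "pfree m \<in> pfree_upto (level m)"
    using j by simp_all
qed

lemma inj_on_mult_power: "inj_on (\<lambda>j. p ^ r * j) A"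
  using p_pos by (auto simp: inj_on_def)

lemma card_level_set: "w \<le> s \<Longrightarrow> card (level_set w) = Bp p d w"
  unfolding level_set_eq_image card_image[OF inj_on_mult_power] by (rule card_pfree_upto)

lemma sum_level_set_inverse_pfree:
  assumes "w \<le> s"
  shows "(\<Sum>x\<in>level_set w. 1 / of_nat (pfree x) :: rat) = (\<Sum>j\<in>Bset p d w. 1 / of_nat j)"
  unfolding level_set_eq_image[OF assms] sum.reindex[OF inj_on_mult_power] Bset_eq_pfree_upto[OF assms]
  by (intro sum.cong) (auto simp: pfree_upto_def pfree_power_mult)

lemma low_eq_multiples: "low = {m \<in> {1..n}. p ^ (s - t) dvd m}"
proof -
  have "level m \<le> t \<longleftrightarrow> p ^ (s - t) dvd m" if "m \<in> {1..n}" for m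
    using that prime_gt_1_nat[OF prime] power_dvd_iff_le_multiplicity[where p = p and n = "s - t" and x = m]
      multiplicity_le_s[OF that]
    unfolding level_def by auto
  then show ?thesis unfolding low_def by auto
qed

lemma card_low: "card low = k - 1"
  unfolding low_eq_multiples k_eq
  using card_multiples_atLeastAtMost[of "p ^ (s - t)" n] p_pos n_div_power[of t] t_less by simp

lemma finite_low: "finite low"
  unfolding low_def by simp

lemma low_subset: "low \<subseteq> {1..n}"
  unfolding low_def by auto

lemma Cp_eq_low: "Cp p n s t = low"
proof -
  have "(\<exists>v\<in>{0..t}. multiplicity p m = s - v) \<longleftrightarrow> level m \<le> t" if "m \<in> {1..n}" for m
    using multiplicity_le_s[OF that] t_less unfolding level_def
    by (auto intro!: bexI[of _ "s - multiplicity p m"])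
  then show ?thesis unfolding Cp_def Ap_def low_def by auto
qed

lemma Pip_eq_prod_low: "Pip p n s t = (\<Prod>m\<in>low. 1 / of_nat (pfree m))"
  unfolding Pip_def Cp_eq_low pfree_def ..

lemma total_level_low: "total_level low + t + 1 = U"
proof -
  have "total_level low = (\<Sum>w\<in>{0..t}. \<Sum>m\<in>{m\<in>low. level m = w}. level m)"
    unfolding total_level_def by (rule sum.group[symmetric]) (auto simp: finite_low low_def)
  also have "\<dots> = (\<Sum>w\<in>{0..t}. Bp p e w * w)"
  proof (intro sum.cong refl)
    fix w assume w: "w \<in> {0..t}"
    then have "{m\<in>low. level m = w} = level_set w" unfolding low_def level_set_def by auto
    moreover have "Bp p d w = Bp p e w" using w common_prefix by (intro Bp_cong) auto
    ultimately show "(\<Sum>m\<in>{m\<in>low. level m = w}. level m) = Bp p e w * w"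
      using card_level_set[of w] w t_less by (simp add: level_set_def)
  qed
  finally show ?thesis unfolding Up_def by simp
qed

lemma inverse_eq_level:
  assumes "m \<in> {1..n}"
  shows "(1::rat) / of_nat m = 1 / of_nat (pfree m) * of_nat p ^ level m / of_nat p ^ s"
proof -
  have "(of_nat p ^ s :: rat) = of_nat p ^ multiplicity p m * of_nat p ^ level m"
    using multiplicity_le_s[OF assms] unfolding level_def by (simp flip: power_add)
  moreover have "(of_nat m :: rat) = of_nat p ^ multiplicity p m * of_nat (pfree m)"
    by (subst pfree_decomp) simp
  ultimately show ?thesis using pfree_pos[of m] assms p_pos by (simp add: field_simps)
qed

lemma recip_prod_eq:
  assumes "S \<subseteq> {1..n}"
  shows "recip_prod S
     = (\<Prod>m\<in>S. 1 / of_nat (pfree m)) * of_nat p ^ total_level S / of_nat p ^ (card S * s)"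
proof -
  have "recip_prod S = (\<Prod>m\<in>S. 1 / of_nat m)"
    unfolding recip_prod_def by (simp add: prod_dividef)
  also have "\<dots> = (\<Prod>m\<in>S. 1 / of_nat (pfree m) * of_nat p ^ level m / of_nat p ^ s)"
    using assms by (intro prod.cong) (auto simp: inverse_eq_level)
  also have "\<dots> = (\<Prod>m\<in>S. 1 / of_nat (pfree m)) * (\<Prod>m\<in>S. of_nat p ^ level m) / (\<Prod>m\<in>S. of_nat p ^ s)"
    by (simp only: prod_dividef prod.distrib)
  finally show ?thesis
    by (simp only: total_level_def power_sum prod_constant power_mult mult.commute)
qed

lemma padic_ge_recip_prod:
  assumes "S \<subseteq> {1..n}" "u \<le> total_level S"
  shows "padic_ge p (recip_prod S) (int u - int (card S * s))"
proof -
  have "finite S" using assms(1) finite_subset by blast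
  define b where "b = (\<Prod>m\<in>S. int (pfree m))"
  have not_dvd: "\<not> int p dvd b"
  proof
    assume "int p dvd b"
    then obtain m where "m \<in> S" "int p dvd int (pfree m)"
      unfolding b_def using prime \<open>finite S\<close> by (auto simp: prime_dvd_prod_iff)
    then show False using pfree_not_dvd[of m] assms(1) by auto
  qed
  have "b \<noteq> 0"
    unfolding b_def using \<open>finite S\<close> assms(1) pfree_pos by (auto simp: prod_zero_iff)
  moreover have "(\<Prod>m\<in>S. 1 / of_nat (pfree m) :: rat) = 1 / of_int b"
    unfolding b_def by (simp add: prod_dividef)
  ultimately show ?thesis
    unfolding recip_prod_eq[OF assms(1)]
    using padic_ge_divide_power[OF prime _ not_dvd assms(2), of "card S * s"] by simp
qed

section \<open>The minimal total level\<close>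

lemma finite_k_subsets: "finite k_subsets"
  unfolding k_subsets_def by (rule finite_subset[of _ "Pow {1..n}"]) auto

lemma total_level_exchange:
  assumes "A \<subseteq> {1..n}" "card A = card low"
  shows "total_level low + card (A - low) \<le> total_level A"
proof -
  have "finite A" using assms(1) finite_subset by blast
  have card_eq: "card (low - A) = card (A - low)"
    using assms(2) \<open>finite A\<close> finite_low by (simp add: card_Diff_subset_Int Int_commute)
  have "(\<Sum>m\<in>A - low. t + 1) \<le> (\<Sum>m\<in>A - low. level m)"
    using assms(1) by (intro sum_mono) (auto simp: low_def)
  moreover have "(\<Sum>m\<in>low - A. level m) \<le> (\<Sum>m\<in>low - A. t)"
    by (intro sum_mono) (simp add: low_def)
  moreover have "total_level A = (\<Sum>m\<in>A \<inter> low. level m) + (\<Sum>m\<in>A - low. level m)"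
    unfolding total_level_def using \<open>finite A\<close> by (metis sum.Int_Diff)
  moreover have "total_level low = (\<Sum>m\<in>A \<inter> low. level m) + (\<Sum>m\<in>low - A. level m)"
    unfolding total_level_def using finite_low by (metis sum.Int_Diff Int_commute)
  ultimately show ?thesis using card_eq by (simp add: algebra_simps)
qed

lemma max_level_bound:
  assumes "S \<in> k_subsets"
  obtains x where "x \<in> S" "\<And>m. m \<in> S \<Longrightarrow> level m \<le> level x"
    and "level x + total_level low + card (S - {x} - low) \<le> total_level S"
proof -
  have S: "S \<subseteq> {1..n}" "card S = k" using assms unfolding k_subsets_def by auto
  have "finite S" using S(1) finite_subset by blast
  moreover have "S \<noteq> {}" using S(2) k_eq by auto
  ultimately obtain x where x: "x \<in> S" "\<And>m. m \<in> S \<Longrightarrow> level m \<le> level x"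
  proof -
    have "Max (level ` S) \<in> level ` S" using \<open>finite S\<close> \<open>S \<noteq> {}\<close> by simp
    then obtain x where "x \<in> S" "level x = Max (level ` S)" by auto
    then show ?thesis using that \<open>finite S\<close> by simp
  qed
  have "card (S - {x}) = card low"
    using S x(1) \<open>finite S\<close> card_low by simp
  then have "total_level low + card (S - {x} - low) \<le> total_level (S - {x})"
    using S(1) by (intro total_level_exchange) auto
  moreover have "total_level S = level x + total_level (S - {x})"
    unfolding total_level_def using \<open>finite S\<close> x(1) by (simp add: sum.remove)
  ultimately show ?thesis using that x by simp
qed

lemma total_level_ge:
  assumes "S \<in> k_subsets"
  shows "U \<le> total_level S"
proof -
  obtain x where x: "x \<in> S" "\<And>m. m \<in> S \<Longrightarrow> level m \<le> level x"
    and bound: "level x + total_level low + card (S - {x} - low) \<le> total_level S"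
    using max_level_bound[OF assms] by blast
  have S: "S \<subseteq> {1..n}" "card S = k" using assms unfolding k_subsets_def by auto
  have "t < level x"
  proof (rule ccontr)
    assume "\<not> t < level x"
    then have "S \<subseteq> low" using x(2) S(1) unfolding low_def by fastforce
    then have "card S \<le> card low" using finite_low by (rule card_mono[rotated])
    then show False using S(2) card_low k_eq by simp
  qed
  then show ?thesis using bound total_level_low by simp
qed

lemma total_level_eq_cases:
  assumes "S \<in> k_subsets" "total_level S = U + v"
  shows "(\<forall>m\<in>S. level m \<le> t + v) \<or> (\<exists>x\<in>level_set (t + v + 1). S = insert x low)"
proof -
  obtain x where x: "x \<in> S" "\<And>m. m \<in> S \<Longrightarrow> level m \<le> level x"
    and bound: "level x + total_level low + card (S - {x} - low) \<le> total_level S"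
    using max_level_bound[OF assms(1)] by blast
  have S: "S \<subseteq> {1..n}" "card S = k" using assms unfolding k_subsets_def by auto
  have "finite S" using S(1) finite_subset by blast
  consider "level x \<le> t + v" | "level x = t + v + 1" "card (S - {x} - low) = 0"
    using bound assms(2) total_level_low by linarith
  then show ?thesis
  proof cases
    case 1
    then show ?thesis using x(2) order_trans by blast
  next
    case 2
    have "S - {x} \<subseteq> low" using 2(2) \<open>finite S\<close> by simp
    moreover have "card (S - {x}) = card low" using S x(1) \<open>finite S\<close> card_low by simp
    ultimately have "S - {x} = low" using card_subset_eq[OF finite_low] by blast
    then have "S = insert x low" using x(1) by blast
    moreover have "x \<in> level_set (t + v + 1)"
      using 2(1) x(1) S(1) unfolding level_set_def by auto
    ultimately show ?thesis by blast
  qed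
qed

lemma insert_low:
  assumes "x \<in> level_set (t + v + 1)"
  shows "x \<notin> low" "insert x low \<in> k_subsets" "total_level (insert x low) = U + v"
proof -
  have x: "x \<in> {1..n}" "level x = t + v + 1" using assms unfolding level_set_def by auto
  show "x \<notin> low" using x unfolding low_def by auto
  then show "insert x low \<in> k_subsets"
    unfolding k_subsets_def using x low_subset finite_low card_low k_eq by simp
  show "total_level (insert x low) = U + v"
    unfolding total_level_def using \<open>x \<notin> low\<close> finite_low x total_level_low total_level_def by simp
qed

lemma recip_prod_insert_low:
  assumes "x \<in> level_set (t + v + 1)"
  shows "recip_prod (insert x low)
       = Pip p n s t / of_nat (pfree x) * of_nat p ^ (U + v) / of_nat p ^ (k * s)"
proof -
  have "insert x low \<subseteq> {1..n}" "card (insert x low) = k"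
    using insert_low(2)[OF assms] unfolding k_subsets_def by auto
  moreover have "(\<Prod>m\<in>insert x low. 1 / of_nat (pfree m) :: rat) = Pip p n s t / of_nat (pfree x)"
    using insert_low(1)[OF assms] finite_low by (simp add: Pip_eq_prod_low)
  ultimately show ?thesis using recip_prod_eq insert_low(3)[OF assms] by simp
qed

section \<open>The sum \<open>H'_p\<close> as a sum over subsets\<close>

definition level_vectors :: "nat \<Rightarrow> (nat \<Rightarrow> nat) set" where
  "level_vectors v = {vs \<in> {1..k} \<rightarrow>\<^sub>E {0..t+v}. (\<Sum>i\<in>{1..k}. vs i) = U + v}"

definition ordered_tuples :: "(nat \<Rightarrow> nat) \<Rightarrow> (nat \<Rightarrow> nat) set" where
  "ordered_tuples vs = {js \<in> (\<Pi>\<^sub>E i\<in>{1..k}. Bset p d (vs i)).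
     \<forall>i\<in>{1..<k}. (of_nat (js i) / of_nat p ^ vs i :: rat) < of_nat (js (i+1)) / of_nat p ^ vs (i+1)}"

text \<open>The term of \<open>H'_p\<close> indexed by \<open>(v_i, j_i)\<close> is the subset of the \<open>m_i = p^(s - v_i) j_i\<close>;
  since \<open>j_i/p^v_i = m_i/p^s\<close>, the order condition says \<open>m_1 < \<dots> < m_k\<close>.\<close>

definition tuple_set :: "(nat \<Rightarrow> nat) \<times> (nat \<Rightarrow> nat) \<Rightarrow> nat set" where
  "tuple_set x = (\<lambda>i. p ^ (s - fst x i) * snd x i) ` {1..k}"

definition level_bounded :: "nat \<Rightarrow> nat set set" where
  "level_bounded v = {S \<in> k_subsets. total_level S = U + v \<and> (\<forall>m\<in>S. level m \<le> t + v)}"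

lemma tuple_entry:
  assumes "t + v < s" "vs \<in> level_vectors v" "js \<in> ordered_tuples vs" "i \<in> {1..k}"
  shows "p ^ (s - vs i) * js i \<in> level_set (vs i)" "pfree (p ^ (s - vs i) * js i) = js i"
    and "vs i \<le> t + v"
proof -
  show "vs i \<le> t + v" using assms(2,4) unfolding level_vectors_def by auto
  then have "js i \<in> pfree_upto (vs i)"
    using assms Bset_eq_pfree_upto[of "vs i"] unfolding ordered_tuples_def by auto
  then show "p ^ (s - vs i) * js i \<in> level_set (vs i)" "pfree (p ^ (s - vs i) * js i) = js i"
    using level_set_eq_image[of "vs i"] \<open>vs i \<le> t + v\<close> assms(1) pfree_power_mult
    unfolding pfree_upto_def by auto
qed

lemma strict_mono_on_tuple:
  assumes "t + v < s" "vs \<in> level_vectors v" "js \<in> ordered_tuples vs"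
  shows "strict_mono_on {1..k} (\<lambda>i. p ^ (s - vs i) * js i)"
proof (rule strict_mono_on_atLeastAtMostI)
  fix i assume i: "i \<in> {1..<k}"
  then have "vs i \<le> s" "vs (i + 1) \<le> s"
    using tuple_entry(3)[OF assms, of i] tuple_entry(3)[OF assms, of "i + 1"] assms(1) by auto
  moreover have "(of_nat (js i) / of_nat p ^ vs i :: rat) < of_nat (js (i+1)) / of_nat p ^ vs (i+1)"
    using assms(3) i unfolding ordered_tuples_def by auto
  ultimately show "p ^ (s - vs i) * js i < p ^ (s - vs (i + 1)) * js (i + 1)"
    using divide_power_less_iff[OF p_pos] by blast
qed

lemma tuple_set_mem:
  assumes "t + v < s" "vs \<in> level_vectors v" "js \<in> ordered_tuples vs"
  shows "tuple_set (vs, js) \<in> level_bounded v"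
    and "(\<Prod>m\<in>tuple_set (vs, js). 1 / of_nat (pfree m) :: rat) = 1 / (\<Prod>i\<in>{1..k}. of_nat (js i))"
proof -
  define m where "m i = p ^ (s - vs i) * js i" for i
  note entry = tuple_entry[OF assms, folded m_def]
  have inj: "inj_on m {1..k}"
    using strict_mono_on_imp_inj_on strict_mono_on_tuple[OF assms] unfolding m_def by blast
  have set_eq: "tuple_set (vs, js) = m ` {1..k}" unfolding tuple_set_def m_def by simp
  have "total_level (m ` {1..k}) = (\<Sum>i\<in>{1..k}. vs i)"
    unfolding total_level_def sum.reindex[OF inj] using entry(1) by (simp add: level_set_def)
  also have "\<dots> = U + v" using assms(2) unfolding level_vectors_def by auto
  finally show "tuple_set (vs, js) \<in> level_bounded v"
    unfolding level_bounded_def k_subsets_def set_eq using entry card_image[OF inj]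
    by (auto simp: level_set_def)
  show "(\<Prod>m\<in>tuple_set (vs, js). 1 / of_nat (pfree m) :: rat) = 1 / (\<Prod>i\<in>{1..k}. of_nat (js i))"
    unfolding set_eq prod.reindex[OF inj] using entry(2) by (simp add: prod_dividef)
qed

lemma inj_on_tuple_set:
  assumes "t + v < s"
  shows "inj_on tuple_set (SIGMA vs:level_vectors v. ordered_tuples vs)"
proof (rule inj_onI, clarify)
  fix vs js vs' js'
  assume x: "vs \<in> level_vectors v" "js \<in> ordered_tuples vs"
    and y: "vs' \<in> level_vectors v" "js' \<in> ordered_tuples vs'"
    and eq: "tuple_set (vs, js) = tuple_set (vs', js')"
  have same: "p ^ (s - vs i) * js i = p ^ (s - vs' i) * js' i" if "i \<in> {1..k}" for i
    using strict_mono_on_atLeastAtMost_unique[OF strict_mono_on_tuple[OF assms x]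
        strict_mono_on_tuple[OF assms y] _ that] eq
    unfolding tuple_set_def by simp
  have "vs i = vs' i" if "i \<in> {1..k}" for i
    using tuple_entry(1)[OF assms x that] tuple_entry(1)[OF assms y that] same[OF that]
    unfolding level_set_def by simp
  moreover have "js i = js' i" if "i \<in> {1..k}" for i
    using tuple_entry(2)[OF assms x that] tuple_entry(2)[OF assms y that] same[OF that] by simp
  moreover have "vs \<in> extensional {1..k}" "vs' \<in> extensional {1..k}"
    using x(1) y(1) unfolding level_vectors_def by (auto simp: PiE_iff)
  moreover have "js \<in> extensional {1..k}" "js' \<in> extensional {1..k}"
    using x(2) y(2) unfolding ordered_tuples_def by (auto simp: PiE_iff)
  ultimately show "vs = vs' \<and> js = js'"
    by (auto intro: extensionalityI)
qed

lemma ordered_tuples_of_strict_mono_on: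
  assumes "strict_mono_on {1..k} f" "f ` {1..k} \<subseteq> {1..n}"
  shows "restrict (pfree \<circ> f) {1..k} \<in> ordered_tuples (restrict (level \<circ> f) {1..k})"
proof -
  define vs where "vs = restrict (level \<circ> f) {1..k}"
  define js where "js = restrict (pfree \<circ> f) {1..k}"
  have f_eq: "f i = p ^ (s - vs i) * js i" "js i \<in> pfree_upto (vs i)" "vs i \<le> s"
    if "i \<in> {1..k}" for i
  proof -
    have "f i \<in> {1..n}" using assms(2) that by blast
    then show "f i = p ^ (s - vs i) * js i" "js i \<in> pfree_upto (vs i)" "vs i \<le> s"
      using level_pfree_decomp[of "f i"] that unfolding vs_def js_def by (auto simp: level_def)
  qed
  have "(of_nat (js i) / of_nat p ^ vs i :: rat) < of_nat (js (i+1)) / of_nat p ^ vs (i+1)"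
    if "i \<in> {1..<k}" for i
  proof -
    have "p ^ (s - vs i) * js i < p ^ (s - vs (i + 1)) * js (i + 1)"
      using strict_mono_onD[OF assms(1), of i "i + 1"] f_eq[of i] f_eq[of "i + 1"] that by auto
    then show ?thesis
      using divide_power_less_iff[OF p_pos] f_eq(3)[of i] f_eq(3)[of "i + 1"] that by auto
  qed
  moreover have "js \<in> (\<Pi>\<^sub>E i\<in>{1..k}. Bset p d (vs i))"
    using f_eq(2) Bset_eq_pfree_upto[OF f_eq(3)] by (auto simp: PiE_iff js_def)
  ultimately show ?thesis unfolding ordered_tuples_def vs_def js_def by blast
qed

lemma level_bounded_subset_tuple_set:
  "level_bounded v \<subseteq> tuple_set ` (SIGMA vs:level_vectors v. ordered_tuples vs)"
proof
  fix S assume "S \<in> level_bounded v"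
  then have S: "S \<subseteq> {1..n}" "card S = k" "total_level S = U + v" "\<And>m. m \<in> S \<Longrightarrow> level m \<le> t + v"
    unfolding level_bounded_def k_subsets_def by auto
  moreover have "finite S" using S(1) finite_subset by blast
  ultimately obtain f where f: "strict_mono_on {1..k} f" "f ` {1..k} = S"
    using finite_ex_strict_mono_on_atLeastAtMost by metis
  define vs where "vs = restrict (level \<circ> f) {1..k}"
  define js where "js = restrict (pfree \<circ> f) {1..k}"
  have "(\<Sum>i\<in>{1..k}. vs i) = total_level S"
    unfolding total_level_def f(2)[symmetric] sum.reindex[OF strict_mono_on_imp_inj_on[OF f(1)]]
      vs_def by simp
  then have "vs \<in> level_vectors v"
    unfolding level_vectors_def vs_def using S(3,4) f(2) by auto
  moreover have "js \<in> ordered_tuples vs"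
    unfolding vs_def js_def using f S(1) by (intro ordered_tuples_of_strict_mono_on) auto
  moreover have "tuple_set (vs, js) = S"
    unfolding tuple_set_def fst_conv snd_conv f(2)[symmetric]
  proof (intro image_cong refl)
    fix i assume "i \<in> {1..k}"
    then have "f i \<in> {1..n}" using f(2) S(1) by blast
    then show "p ^ (s - vs i) * js i = f i"
      using level_pfree_decomp(1)[of "f i"] \<open>i \<in> {1..k}\<close> unfolding vs_def js_def by simp
  qed
  ultimately show "S \<in> tuple_set ` (SIGMA vs:level_vectors v. ordered_tuples vs)" by blast
qed

lemma Hprime_eq_sum_level_bounded:
  assumes "t + v < s"
  shows "Hprime p k t e d v = (\<Sum>S\<in>level_bounded v. \<Prod>m\<in>S. 1 / of_nat (pfree m))"
proof -
  let ?T = "SIGMA vs:level_vectors v. ordered_tuples vs"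
  have "finite (level_vectors v)"
    unfolding level_vectors_def by (simp add: finite_PiE)
  moreover have "finite (ordered_tuples vs)" for vs
    unfolding ordered_tuples_def Bset_def by (simp add: finite_PiE finite_image_set)
  ultimately have "Hprime p k t e d v = (\<Sum>(vs, js)\<in>?T. 1 / (\<Prod>i\<in>{1..k}. of_nat (js i)))"
    unfolding Hprime_def level_vectors_def[symmetric] ordered_tuples_def[symmetric]
    by (simp add: sum.Sigma)
  also have "\<dots> = (\<Sum>x\<in>?T. \<Prod>m\<in>tuple_set x. 1 / of_nat (pfree m))"
    using tuple_set_mem(2)[OF assms] by (intro sum.cong) auto
  also have "\<dots> = (\<Sum>S\<in>level_bounded v. \<Prod>m\<in>S. 1 / of_nat (pfree m))"
  proof (rule sum.reindex_bij_betw)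
    show "bij_betw tuple_set ?T (level_bounded v)"
      unfolding bij_betw_def using inj_on_tuple_set[OF assms] level_bounded_subset_tuple_set
        tuple_set_mem(1)[OF assms] by blast
  qed
  finally show ?thesis .
qed

lemma sum_level_bounded_recip_prod:
  assumes "t + v < s"
  shows "(\<Sum>S\<in>level_bounded v. recip_prod S)
       = Hprime p k t e d v * of_nat p ^ (U + v) / of_nat p ^ (k * s)"
proof -
  have "(\<Sum>S\<in>level_bounded v. recip_prod S)
      = (\<Sum>S\<in>level_bounded v. (\<Prod>m\<in>S. 1 / of_nat (pfree m)) * of_nat p ^ (U + v) / of_nat p ^ (k * s))"
    by (intro sum.cong refl) (auto simp: level_bounded_def k_subsets_def recip_prod_eq)
  then show ?thesis
    unfolding Hprime_eq_sum_level_bounded[OF assms] by (simp add: sum_distrib_right sum_divide_distrib)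
qed

lemma sum_insert_low_recip_prod:
  assumes "t + v < s"
  shows "(\<Sum>x\<in>level_set (t + v + 1). recip_prod (insert x low))
       = Pip p n s t * (\<Sum>j\<in>Bset p d (t + v + 1). 1 / of_nat j) * of_nat p ^ (U + v) / of_nat p ^ (k * s)"
proof -
  have "(\<Sum>x\<in>level_set (t + v + 1). recip_prod (insert x low))
      = (\<Sum>x\<in>level_set (t + v + 1). 1 / of_nat (pfree x)) * Pip p n s t * of_nat p ^ (U + v) / of_nat p ^ (k * s)"
    unfolding sum_distrib_right sum_divide_distrib by (intro sum.cong refl) (simp add: recip_prod_insert_low)
  then show ?thesis
    using sum_level_set_inverse_pfree[of "t + v + 1"] assms by (simp add: mult.commute)
qed

lemma sum_total_level_eq:
  assumes "t + v < s"
  shows "(\<Sum>S\<in>{S \<in> k_subsets. total_level S = U + v}. recip_prod S)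
       = Hp p n s t k e d v * of_nat p ^ (U + v) / of_nat p ^ (k * s)"
proof -
  let ?I = "(\<lambda>x. insert x low) ` level_set (t + v + 1)"
  have "{S \<in> k_subsets. total_level S = U + v} = level_bounded v \<union> ?I"
    using total_level_eq_cases insert_low unfolding level_bounded_def by blast
  moreover have "level_bounded v \<inter> ?I = {}"
    unfolding level_bounded_def level_set_def by auto
  moreover have "finite (level_bounded v)"
    using finite_k_subsets unfolding level_bounded_def by simp
  moreover have "finite (level_set w)" for w
    unfolding level_set_def by simp
  moreover have "inj_on (\<lambda>x. insert x low) (level_set (t + v + 1))"
    using insert_low(1) by (auto simp: inj_on_def)
  ultimately have "(\<Sum>S\<in>{S \<in> k_subsets. total_level S = U + v}. recip_prod S)
      = (\<Sum>S\<in>level_bounded v. recip_prod S) + (\<Sum>x\<in>level_set (t + v + 1). recip_prod (insert x low))"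
    by (simp add: sum.union_disjoint sum.reindex)
  then show ?thesis
    unfolding sum_level_bounded_recip_prod[OF assms] sum_insert_low_recip_prod[OF assms] Hp_def
    by (simp add: algebra_simps add_divide_distrib)
qed

lemma sum_total_level_less:
  "(\<Sum>S\<in>{S \<in> k_subsets. total_level S < U + (s - t)}. recip_prod S)
     = (\<Sum>v=0..s-t-1. Hp p n s t k e d v * of_nat p powi (int v - int k * int s + int U))"
proof -
  let ?A = "{S \<in> k_subsets. total_level S < U + (s - t)}"
  have "(\<Sum>S\<in>?A. recip_prod S) = (\<Sum>v=0..s-t-1. \<Sum>S\<in>{S \<in> ?A. total_level S - U = v}. recip_prod S)"
    using finite_k_subsets total_level_ge by (intro sum.group[symmetric]) fastforce+
  also have "\<dots> = (\<Sum>v=0..s-t-1. \<Sum>S\<in>{S \<in> k_subsets. total_level S = U + v}. recip_prod S)"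
    using total_level_ge t_less by (intro sum.cong refl arg_cong2[where f = sum]) fastforce+
  also have "\<dots> = (\<Sum>v=0..s-t-1. Hp p n s t k e d v * of_nat p powi (int v - int k * int s + int U))"
  proof (intro sum.cong refl)
    fix v assume "v \<in> {0..s-t-1}"
    then have "t + v < s" using t_less by auto
    moreover have "(of_nat p :: rat) ^ (U + v) / of_nat p ^ (k * s)
        = of_nat p powi (int v - int k * int s + int U)"
      using p_pos by (simp add: power_int_diff algebra_simps flip: power_int_of_nat)
    ultimately show "(\<Sum>S\<in>{S \<in> k_subsets. total_level S = U + v}. recip_prod S)
        = Hp p n s t k e d v * of_nat p powi (int v - int k * int s + int U)"
      using sum_total_level_eq by (simp flip: times_divide_eq_right)
  qed
  finally show ?thesis .
qed

theorem expansion: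
  "padic_ge p (Hnk n k - (\<Sum>v=0..s-t-1. Hp p n s t k e d v * of_nat p powi (int v - int k * int s + int U)))
     (int s - int t - int k * int s + int U)"
proof -
  let ?A = "{S \<in> k_subsets. total_level S < U + (s - t)}"
  let ?B = "{S \<in> k_subsets. U + (s - t) \<le> total_level S}"
  have "Hnk n k = (\<Sum>S\<in>?A \<union> ?B. recip_prod S)"
    unfolding Hnk_def recip_prod_def k_subsets_def by (intro arg_cong2[where f = sum]) auto
  also have "\<dots> = (\<Sum>S\<in>?A. recip_prod S) + (\<Sum>S\<in>?B. recip_prod S)"
    using finite_k_subsets by (intro sum.union_disjoint) auto
  finally have diff: "Hnk n k - (\<Sum>v=0..s-t-1. Hp p n s t k e d v * of_nat p powi (int v - int k * int s + int U))
      = (\<Sum>S\<in>?B. recip_prod S)"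
    unfolding sum_total_level_less by simp
  have "padic_ge p (recip_prod S) (int (U + (s - t)) - int (k * s))" if "S \<in> ?B" for S
    using that padic_ge_recip_prod[of S "U + (s - t)"] unfolding k_subsets_def by auto
  then have "padic_ge p (\<Sum>S\<in>?B. recip_prod S) (int (U + (s - t)) - int (k * s))"
    using finite_k_subsets by (intro padic_ge_sum[OF prime]) auto
  moreover have "int s - int t - int k * int s + int U = int (U + (s - t)) - int (k * s)"
    using t_less by simp
  ultimately show ?thesis unfolding diff by argo
qed

end

theorem lemma3p2:
  fixes p k n s t :: nat and e d :: "nat \<Rightarrow> nat"
  assumes "prime p"
    and "\<forall>i\<le>t. e i < p" and "e 0 \<noteq> 0"
    and "k = numval p e t + 1" and "k \<ge> 2"
    and "\<forall>i\<le>s. d i < p" and "d 0 \<noteq> 0"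
    and "n = numval p d s" and "s \<ge> t + 1"
    and "\<forall>i\<le>t. d i = e i"
  shows "padic_ge p
           (Hnk n k - (\<Sum>v=0..s-t-1. Hp p n s t k e d v
               * of_nat p powi (int v - int k * int s + int (Up p t e))))
           (int s - int t - int k * int s + int (Up p t e))"
proof -
  have "numval p e t = numval p d t"
    using assms(10) by (intro numval_cong) simp
  then interpret base_p_digits p n s t k d e
    using assms by unfold_locales auto
  show ?thesis by (rule expansion)
qed

end
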